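(* Let $p(t)=\sum_{k=0}^\infty a_kt^k$ be a real power series with $-1<a_i<1$ for all $i\ge0$ and $\sum_{i=0}^\infty|a_i|\le1$, and let $p^{[1]}=p$, $p^{[n+1]}=p(p^{[n]})$, $p^{[n]}(t)=\sum_k a_k^{[n]}t^k$. If $\lim_{n\to\infty}p^{[n]}(0)=\lim_{n\to\infty}a_0^{[n]}=a$ exists, then $\lim_{n\to\infty}p^{[n]}(t)=a$ for every $t\in(-1,1)$. *)

theory Defs
  imports Complex_Main
begin

definition pser :: "(nat \<Rightarrow> real) \<Rightarrow> real \<Rightarrow> real" where
  "pser a t = (\<Sum>k. a k * t ^ k)"

end

theory Submission
  imports Defs "HOL-Complex_Analysis.Riemann_Mapping"
begin

(*
  Since the coefficients are absolutely summable with sum at most 1 and |a 0| < 1, p = pser a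
  extends to a holomorphic self-map of the unit disc. By the Schwarz-Pick lemma it does not
  increase the pseudo-hyperbolic distance pdist u v = |u - v| / (1 - u v), so
  pdist (p^n t) (p^n 0) <= |t| for all n. If |L| = 1 this forces p^n t -> L. If |L| < 1, then L
  is a fixed point of p, and pdist (p^n t) L decreases to some D. If D > 0, a limit point z of
  the orbit satisfies pdist (p z) L = pdist z L with z <> L; the equality case of Schwarz-Pick
  then makes p a disc automorphism, conjugate to a rotation about L. On the real line such a
  map is x |-> x or a Moebius involution, and the coefficient bounds reduce both to p x = x or
  p x = -x, which contradicts |a 1| < 1.
*)

section \<open>Power series with absolutely summable coefficients\<close>

lemma summable_norm_powser_of_real:
  fixes z :: "'a::{real_normed_field,banach}"
  assumes "summable (\<lambda>k. \<bar>a k\<bar>)" and "norm z \<le> 1"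
  shows "summable (\<lambda>k. norm (of_real (a k) * z ^ k))"
proof (rule summable_comparison_test[OF _ assms(1)])
  have "norm (of_real (a k) * z ^ k) \<le> \<bar>a k\<bar>" for k
    using power_le_one[of "norm z" k] assms(2) by (simp add: norm_mult norm_power mult_left_le)
  then show "\<exists>N. \<forall>k\<ge>N. norm (norm (of_real (a k) * z ^ k)) \<le> \<bar>a k\<bar>" by simp
qed

lemma norm_powser_minus_initial_le:
  fixes z :: "'a::{real_normed_field,banach}"
  assumes summable: "summable (\<lambda>k. \<bar>a k\<bar>)" and z: "norm z \<le> 1"
  shows "norm ((\<Sum>k. of_real (a k) * z ^ k) - (\<Sum>k<m. of_real (a k) * z ^ k))
           \<le> ((\<Sum>k. \<bar>a k\<bar>) - (\<Sum>k<m. \<bar>a k\<bar>)) * norm z ^ m"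
proof -
  define f where "f k = of_real (a k) * z ^ k" for k
  have norm_f: "summable (\<lambda>k. norm (f k))"
    unfolding f_def by (rule summable_norm_powser_of_real[OF summable z])
  have tail_f: "summable (\<lambda>k. norm (f (k + m)))"
    by (rule summable_ignore_initial_segment[OF norm_f])
  have tail_a: "summable (\<lambda>k. \<bar>a (k + m)\<bar>)"
    by (rule summable_ignore_initial_segment[OF summable])
  have "(\<Sum>k. f k) - (\<Sum>k<m. f k) = (\<Sum>k. f (k + m))"
    using suminf_split_initial_segment[OF summable_norm_cancel[OF norm_f], of m] by simp
  also have "norm \<dots> \<le> (\<Sum>k. norm (f (k + m)))"
    by (rule summable_norm[OF tail_f])
  also have "\<dots> \<le> (\<Sum>k. \<bar>a (k + m)\<bar> * norm z ^ m)"
  proof (rule suminf_le)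
    show "norm (f (k + m)) \<le> \<bar>a (k + m)\<bar> * norm z ^ m" for k
      using power_le_one[of "norm z" k] z
      by (simp add: f_def norm_mult norm_power power_add mult_left_mono mult_left_le_one_le)
  qed (use tail_f summable_mult2[OF tail_a] in auto)
  also have "\<dots> = (\<Sum>k. \<bar>a (k + m)\<bar>) * norm z ^ m"
    by (rule suminf_mult2[OF tail_a, symmetric])
  also have "(\<Sum>k. \<bar>a (k + m)\<bar>) = (\<Sum>k. \<bar>a k\<bar>) - (\<Sum>k<m. \<bar>a k\<bar>)"
    using suminf_split_initial_segment[OF summable, of m] by simp
  finally show ?thesis by (simp add: f_def)
qed

lemma pser_0 [simp]: "pser a 0 = a 0"
  by (simp add: pser_def)

definition cpser :: "(nat \<Rightarrow> real) \<Rightarrow> complex \<Rightarrow> complex" where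
  "cpser a z = (\<Sum>k. of_real (a k) * z ^ k)"

lemma cpser_of_real:
  assumes "summable (\<lambda>k. \<bar>a k\<bar>)" and "\<bar>x\<bar> \<le> 1"
  shows "cpser a (of_real x) = of_real (pser a x)"
proof -
  have "summable (\<lambda>k. a k * x ^ k)"
    using summable_norm_cancel summable_norm_powser_of_real[OF assms(1), of x] assms(2) by force
  then have "(\<lambda>k. complex_of_real (a k * x ^ k)) sums of_real (pser a x)"
    unfolding pser_def by (intro sums_of_real summable_sums)
  then show ?thesis
    by (simp add: cpser_def sums_iff)
qed

lemma holomorphic_on_cpser:
  assumes "summable (\<lambda>k. \<bar>a k\<bar>)"
  shows "cpser a holomorphic_on ball 0 1"
proof -
  have "summable (\<lambda>k. of_real (a k) * (1::complex) ^ k)"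
    using summable_norm_cancel summable_norm_powser_of_real[OF assms, of "1::complex"] by force
  from termdiffs_strong[OF this] show ?thesis
    unfolding holomorphic_on_def cpser_def field_differentiable_def
    by (metis has_field_derivative_at_within mem_ball_0 norm_one)
qed

lemma isCont_pser:
  assumes "summable (\<lambda>k. \<bar>a k\<bar>)" and "\<bar>x\<bar> < 1"
  shows "isCont (pser a) x"
proof -
  have "summable (\<lambda>k. a k * 1 ^ k)"
    using summable_norm_cancel summable_norm_powser_of_real[OF assms(1), of "1::real"] by force
  from isCont_powser[OF this] show ?thesis
    using assms(2) by (simp add: pser_def[abs_def])
qed

section \<open>Moebius maps and the pseudo-hyperbolic distance\<close>

lemma one_minus_mult_pos:
  fixes u v :: real
  assumes "\<bar>u\<bar> < 1" and "\<bar>v\<bar> < 1"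
  shows "0 < 1 - u * v"
proof -
  have "\<bar>u * v\<bar> < 1"
    using mult_strict_mono'[of "\<bar>u\<bar>" 1 "\<bar>v\<bar>" 1] assms by (simp add: abs_mult)
  then show ?thesis by linarith
qed

definition disc_moebius :: "real \<Rightarrow> complex \<Rightarrow> complex" where
  "disc_moebius c = Moebius_function 0 (of_real c)"

lemma disc_moebius_of_real: "disc_moebius c (of_real u) = of_real ((u - c) / (1 - c * u))"
  by (simp add: disc_moebius_def Moebius_function_simple)

lemma norm_disc_moebius_lt_1: "\<bar>c\<bar> < 1 \<Longrightarrow> norm z < 1 \<Longrightarrow> norm (disc_moebius c z) < 1"
  unfolding disc_moebius_def by (rule Moebius_function_norm_lt_1) auto

lemma disc_moebius_inverse: "\<bar>c\<bar> < 1 \<Longrightarrow> norm z < 1 \<Longrightarrow> disc_moebius (-c) (disc_moebius c z) = z"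
  unfolding disc_moebius_def by (rule Moebius_function_compose) auto

lemma holomorphic_on_disc_moebius: "\<bar>c\<bar> < 1 \<Longrightarrow> disc_moebius c holomorphic_on ball 0 1"
  unfolding disc_moebius_def by (rule Moebius_function_holomorphic) auto

definition pdist :: "real \<Rightarrow> real \<Rightarrow> real" where
  "pdist u v = \<bar>u - v\<bar> / (1 - u * v)"

lemma norm_disc_moebius_of_real:
  assumes "\<bar>u\<bar> < 1" and "\<bar>c\<bar> < 1"
  shows "norm (disc_moebius c (of_real u)) = pdist u c"
  using one_minus_mult_pos[OF assms(2,1)] unfolding disc_moebius_of_real norm_of_real
  by (simp add: pdist_def abs_divide mult.commute)

lemma pdist_nonneg: "\<bar>u\<bar> < 1 \<Longrightarrow> \<bar>v\<bar> < 1 \<Longrightarrow> 0 \<le> pdist u v"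
  using one_minus_mult_pos[of u v] by (simp add: pdist_def)

lemma pdist_pos: "\<bar>u\<bar> < 1 \<Longrightarrow> \<bar>v\<bar> < 1 \<Longrightarrow> u \<noteq> v \<Longrightarrow> 0 < pdist u v"
  using one_minus_mult_pos[of u v] by (simp add: pdist_def)

lemma pdist_lt_1:
  assumes "\<bar>u\<bar> < 1" and "\<bar>v\<bar> < 1"
  shows "pdist u v < 1"
proof -
  have "0 < (1 - u) * (1 + v)" "0 < (1 + u) * (1 - v)"
    using assms by (auto intro!: mult_pos_pos)
  then have "\<bar>u - v\<bar> < 1 - u * v"
    by (simp add: algebra_simps abs_less_iff)
  then show ?thesis
    using one_minus_mult_pos[OF assms] by (simp add: pdist_def)
qed

lemma tendsto_pdist:
  assumes "X \<longlonglongrightarrow> u" and "1 - u * v \<noteq> 0"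
  shows "(\<lambda>n. pdist (X n) v) \<longlonglongrightarrow> pdist u v"
  unfolding pdist_def using assms by (intro tendsto_intros) auto

lemma abs_diff_le_pdist:
  assumes "\<bar>u\<bar> < 1" and "\<bar>v\<bar> < 1"
  shows "\<bar>u - v\<bar> \<le> 2 * pdist u v"
proof -
  have "\<bar>u - v\<bar> = pdist u v * (1 - u * v)"
    using one_minus_mult_pos[OF assms] by (simp add: pdist_def)
  also have "\<dots> \<le> pdist u v * 2"
    using pdist_nonneg[OF assms] one_minus_mult_pos[of u "-v"] assms
    by (intro mult_left_mono) auto
  finally show ?thesis by simp
qed

lemma abs_diff_le_pdist_boundary:
  assumes u: "\<bar>u\<bar> < 1" and v: "\<bar>v\<bar> < 1" and le: "pdist u v \<le> \<delta>" and "\<delta> < 1"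
  shows "\<bar>u - v\<bar> \<le> \<delta> / (1 - \<delta>) * (1 - v\<^sup>2)"
proof -
  have "0 \<le> \<delta>"
    using pdist_nonneg[OF u v] le by linarith
  have "\<bar>u - v\<bar> \<le> \<delta> * (1 - u * v)"
    using le one_minus_mult_pos[OF u v] by (simp add: pdist_def pos_divide_le_eq mult.commute)
  also have "1 - u * v \<le> (1 - v\<^sup>2) + \<bar>u - v\<bar>"
  proof -
    have "1 - u * v = (1 - v\<^sup>2) + v * (v - u)"
      by (simp add: power2_eq_square algebra_simps)
    moreover have "\<bar>v * (v - u)\<bar> \<le> \<bar>u - v\<bar>"
      using v by (simp add: abs_mult mult_left_le_one_le abs_minus_commute)
    ultimately show ?thesis
      by linarith
  qed
  then have "\<delta> * (1 - u * v) \<le> \<delta> * ((1 - v\<^sup>2) + \<bar>u - v\<bar>)"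
    using \<open>0 \<le> \<delta>\<close> by (rule mult_left_mono)
  finally have "\<bar>u - v\<bar> * (1 - \<delta>) \<le> \<delta> * (1 - v\<^sup>2)"
    by (simp add: algebra_simps)
  then show ?thesis
    using \<open>\<delta> < 1\<close> by (simp add: pos_le_divide_eq mult.commute)
qed

lemma abs_lt_1_if_pdist_bound:
  fixes z L d :: real
  assumes "\<bar>z\<bar> \<le> 1" and "\<bar>L\<bar> < 1" and "d < 1" and "\<bar>z - L\<bar> \<le> d * (1 - z * L)"
  shows "\<bar>z\<bar> < 1"
proof (rule ccontr)
  assume "\<not> \<bar>z\<bar> < 1"
  then have "z = 1 \<or> z = -1"
    using assms(1) by auto
  then have "1 * (1 - z * L) \<le> d * (1 - z * L)" and "0 < 1 - z * L"
    using assms(2,4) by (auto simp: abs_if algebra_simps split: if_splits)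
  with \<open>d < 1\<close> show False
    by (simp add: mult_le_cancel_right)
qed

section \<open>Iterating a self-map of the interval (-1, 1)\<close>

lemma fixed_point_if_funpow_tendsto:
  assumes "(\<lambda>n. (f ^^ n) x) \<longlonglongrightarrow> L" and "isCont f L"
  shows "f L = L"
proof (rule LIMSEQ_unique)
  show "(\<lambda>n. f ((f ^^ n) x)) \<longlonglongrightarrow> f L"
    by (rule isCont_tendsto_compose[OF assms(2,1)])
  show "(\<lambda>n. f ((f ^^ n) x)) \<longlonglongrightarrow> L"
    using LIMSEQ_Suc[OF assms(1)] by simp
qed

lemma tendsto_boundary_if_pdist_bounded:
  fixes x y :: "nat \<Rightarrow> real"
  assumes x: "x \<longlonglongrightarrow> L" and L: "\<bar>L\<bar> = 1"
    and x_in: "\<And>n. \<bar>x n\<bar> < 1" and y_in: "\<And>n. \<bar>y n\<bar> < 1"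
    and bounded: "\<And>n. pdist (y n) (x n) \<le> \<delta>" and "\<delta> < 1"
  shows "y \<longlonglongrightarrow> L"
proof -
  have "(\<lambda>n. \<delta> / (1 - \<delta>) * (1 - (x n)\<^sup>2)) \<longlonglongrightarrow> \<delta> / (1 - \<delta>) * (1 - L\<^sup>2)"
    by (intro tendsto_intros x)
  moreover have "L\<^sup>2 = 1"
    using L by (metis power2_abs power_one)
  ultimately have "(\<lambda>n. \<delta> / (1 - \<delta>) * (1 - (x n)\<^sup>2)) \<longlonglongrightarrow> 0"
    by simp
  then have "(\<lambda>n. y n - x n) \<longlonglongrightarrow> 0"
    by (rule Lim_null_comparison[rotated])
      (use abs_diff_le_pdist_boundary[OF y_in x_in bounded \<open>\<delta> < 1\<close>] in auto)
  from tendsto_add[OF x this] show ?thesis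
    by simp
qed

lemma pdist_orbit_limit_attained:
  fixes f :: "real \<Rightarrow> real" and y :: "nat \<Rightarrow> real"
  assumes maps: "\<And>z. \<bar>z\<bar> < 1 \<Longrightarrow> \<bar>f z\<bar> < 1"
    and cont: "\<And>z. \<bar>z\<bar> < 1 \<Longrightarrow> isCont f z"
    and L: "\<bar>L\<bar> < 1" and y_in: "\<And>n. \<bar>y n\<bar> < 1" and orbit: "\<And>n. y (Suc n) = f (y n)"
    and D: "(\<lambda>n. pdist (y n) L) \<longlonglongrightarrow> D"
    and bounded: "\<And>n. pdist (y n) L \<le> pdist (y 0) L"
  obtains z where "\<bar>z\<bar> < 1" and "pdist z L = D" and "pdist (f z) L = D"
proof -
  have "\<forall>n. y n \<in> {-1..1}"
    using y_in by (auto simp: abs_less_iff less_imp_le)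
  with compact_imp_seq_compact[OF compact_Icc]
  obtain z r where "z \<in> {-1..1}" and r: "strict_mono r" and "(y \<circ> r) \<longlonglongrightarrow> z"
    by (rule seq_compactE)
  then have yr: "(\<lambda>j. y (r j)) \<longlonglongrightarrow> z"
    by (simp add: o_def)
  have "\<bar>y n - L\<bar> \<le> pdist (y 0) L * (1 - y n * L)" for n
    using bounded[of n] one_minus_mult_pos[OF y_in L, of n]
    by (simp add: pdist_def[of "y n"] pos_divide_le_eq mult.commute)
  then have "\<bar>z - L\<bar> \<le> pdist (y 0) L * (1 - z * L)"
    by (intro LIMSEQ_le[of "\<lambda>j. \<bar>y (r j) - L\<bar>" _ "\<lambda>j. pdist (y 0) L * (1 - y (r j) * L)"]
        tendsto_intros yr) auto
  then have z: "\<bar>z\<bar> < 1"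
    using \<open>z \<in> {-1..1}\<close> abs_lt_1_if_pdist_bound L pdist_lt_1[OF y_in L, of 0] by auto
  have "(\<lambda>j. pdist (y (r j)) L) \<longlonglongrightarrow> pdist z L"
    by (rule tendsto_pdist[OF yr]) (use one_minus_mult_pos[OF z L] in simp)
  moreover have "(\<lambda>j. pdist (y (r j)) L) \<longlonglongrightarrow> D"
    using LIMSEQ_subseq_LIMSEQ[OF D r] by (simp add: o_def)
  ultimately have "pdist z L = D"
    by (rule LIMSEQ_unique)
  have "(\<lambda>j. pdist (f (y (r j))) L) \<longlonglongrightarrow> pdist (f z) L"
    by (rule tendsto_pdist[OF isCont_tendsto_compose[OF cont[OF z] yr]])
      (use one_minus_mult_pos[OF maps[OF z] L] in simp)
  moreover have "(\<lambda>j. pdist (f (y (r j))) L) \<longlonglongrightarrow> D"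
    using LIMSEQ_subseq_LIMSEQ[OF LIMSEQ_Suc[OF D] r] by (simp add: o_def orbit)
  ultimately have "pdist (f z) L = D"
    by (rule LIMSEQ_unique)
  with z \<open>pdist z L = D\<close> show ?thesis
    using that by blast
qed

lemma funpow_tendsto_attracting_fixed_point:
  fixes f :: "real \<Rightarrow> real"
  assumes maps: "\<And>z. \<bar>z\<bar> < 1 \<Longrightarrow> \<bar>f z\<bar> < 1"
    and cont: "\<And>z. \<bar>z\<bar> < 1 \<Longrightarrow> isCont f z"
    and L: "\<bar>L\<bar> < 1" and fixed: "f L = L"
    and contract: "\<And>z. \<bar>z\<bar> < 1 \<Longrightarrow> z \<noteq> L \<Longrightarrow> pdist (f z) L < pdist z L"
    and t: "\<bar>t\<bar> < 1"
  shows "(\<lambda>n. (f ^^ n) t) \<longlonglongrightarrow> L"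
proof -
  define y where "y n = (f ^^ n) t" for n
  define d where "d n = pdist (y n) L" for n
  have y_in: "\<bar>y n\<bar> < 1" for n
    by (induction n) (simp_all add: y_def t maps)
  have "d (Suc n) \<le> d n" for n
    using contract[OF y_in, of n] fixed by (cases "y n = L") (auto simp: d_def y_def pdist_def)
  then have "decseq d"
    by (rule decseq_SucI)
  then obtain D where D: "d \<longlonglongrightarrow> D"
    using decseq_convergent[of d 0] pdist_nonneg[OF y_in L] unfolding d_def by blast
  have "D = 0"
  proof (rule ccontr)
    assume "D \<noteq> 0"
    have "d n \<le> d 0" for n
      using \<open>decseq d\<close> by (simp add: decseq_def)
    then obtain z where z: "\<bar>z\<bar> < 1" and "pdist z L = D" and "pdist (f z) L = D"
      using pdist_orbit_limit_attained[OF maps cont L y_in _ D[unfolded d_def]]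
      by (auto simp: y_def d_def)
    moreover have "z \<noteq> L"
      using \<open>pdist z L = D\<close> \<open>D \<noteq> 0\<close> by (auto simp: pdist_def)
    ultimately show False
      using contract[OF z] by simp
  qed
  have "(\<lambda>n. y n - L) \<longlonglongrightarrow> 0"
  proof (rule Lim_null_comparison)
    show "\<forall>\<^sub>F n in sequentially. norm (y n - L) \<le> 2 * d n"
      using abs_diff_le_pdist[OF y_in L] by (simp add: d_def)
    show "(\<lambda>n. 2 * d n) \<longlonglongrightarrow> 0"
      using tendsto_mult_right_zero[OF D[unfolded \<open>D = 0\<close>], of 2] by (simp add: mult.commute)
  qed
  from tendsto_add[OF this tendsto_const[of L]] show ?thesis
    by (simp add: y_def)
qed

section \<open>Schwarz-Pick and rigidity for pser\<close>

definition moebius_conj :: "(nat \<Rightarrow> real) \<Rightarrow> real \<Rightarrow> complex \<Rightarrow> complex" where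
  "moebius_conj a y w = disc_moebius (pser a y) (cpser a (disc_moebius (-y) w))"

locale subunit_pser =
  fixes a :: "nat \<Rightarrow> real"
  assumes summable_abs: "summable (\<lambda>k. \<bar>a k\<bar>)"
    and sum_abs_le_1: "(\<Sum>k. \<bar>a k\<bar>) \<le> 1"
    and abs_coeff_lt_1: "\<And>k. \<bar>a k\<bar> < 1"
begin

lemma norm_powser_minus_coeff0_le:
  fixes z :: "'a::{real_normed_field,banach}"
  assumes "norm z \<le> 1"
  shows "norm ((\<Sum>k. of_real (a k) * z ^ k) - of_real (a 0)) \<le> (1 - \<bar>a 0\<bar>) * norm z"
proof -
  have "norm ((\<Sum>k. of_real (a k) * z ^ k) - of_real (a 0)) \<le> ((\<Sum>k. \<bar>a k\<bar>) - \<bar>a 0\<bar>) * norm z"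
    using norm_powser_minus_initial_le[OF summable_abs assms, of 1] by simp
  also have "\<dots> \<le> (1 - \<bar>a 0\<bar>) * norm z"
    using sum_abs_le_1 by (intro mult_right_mono) auto
  finally show ?thesis .
qed

lemma pser_quadratic_approx:
  assumes "\<bar>x\<bar> \<le> 1"
  shows "\<bar>pser a x - a 0 - a 1 * x\<bar> \<le> (1 - \<bar>a 0\<bar> - \<bar>a 1\<bar>) * x\<^sup>2"
proof -
  have "\<bar>pser a x - a 0 - a 1 * x\<bar> \<le> ((\<Sum>k. \<bar>a k\<bar>) - \<bar>a 0\<bar> - \<bar>a 1\<bar>) * x\<^sup>2"
    using norm_powser_minus_initial_le[OF summable_abs, of x 2] assms
    by (simp add: numeral_2_eq_2 pser_def diff_diff_eq)
  also have "\<dots> \<le> (1 - \<bar>a 0\<bar> - \<bar>a 1\<bar>) * x\<^sup>2"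
    using sum_abs_le_1 by (intro mult_right_mono) auto
  finally show ?thesis .
qed

lemma norm_cpser_lt_1:
  assumes "norm z < 1"
  shows "norm (cpser a z) < 1"
proof -
  have "norm (cpser a z) \<le> \<bar>a 0\<bar> + (1 - \<bar>a 0\<bar>) * norm z"
    using norm_powser_minus_coeff0_le[of z] norm_triangle_ineq2[of "cpser a z" "of_real (a 0)"] assms
    by (simp add: cpser_def)
  also have "\<dots> < 1"
  proof -
    have "0 < 1 - \<bar>a 0\<bar>"
      using abs_coeff_lt_1[of 0] by simp
    from mult_strict_left_mono[OF assms this] show ?thesis by simp
  qed
  finally show ?thesis .
qed

lemma abs_pser_lt_1: "\<bar>x\<bar> < 1 \<Longrightarrow> \<bar>pser a x\<bar> < 1"
  using norm_cpser_lt_1[of "of_real x"] cpser_of_real[OF summable_abs, of x] by simp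

lemma abs_funpow_pser_lt_1: "\<bar>x\<bar> < 1 \<Longrightarrow> \<bar>(pser a ^^ n) x\<bar> < 1"
  by (induction n) (simp_all add: abs_pser_lt_1)

lemma moebius_conj_self_map:
  assumes y: "\<bar>y\<bar> < 1"
  shows "moebius_conj a y holomorphic_on ball 0 1"
    and "moebius_conj a y 0 = 0"
    and "\<And>w. norm w < 1 \<Longrightarrow> norm (moebius_conj a y w) < 1"
proof -
  have py: "\<bar>pser a y\<bar> < 1"
    by (rule abs_pser_lt_1[OF y])
  have inner: "disc_moebius (-y) ` ball 0 1 \<subseteq> ball 0 1"
    using norm_disc_moebius_lt_1[of "-y"] y by auto
  have middle: "cpser a ` ball 0 1 \<subseteq> ball 0 1"
    using norm_cpser_lt_1 by auto
  have "(cpser a \<circ> disc_moebius (-y)) holomorphic_on ball 0 1"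
    using holomorphic_on_compose_gen[OF holomorphic_on_disc_moebius holomorphic_on_cpser inner]
      y summable_abs by simp
  from holomorphic_on_compose_gen[OF this holomorphic_on_disc_moebius[OF py]]
  show "moebius_conj a y holomorphic_on ball 0 1"
    using inner middle by (auto simp: moebius_conj_def[abs_def] o_def)
  have "disc_moebius (-y) 0 = of_real y"
    using disc_moebius_of_real[of "-y" 0] by simp
  then show "moebius_conj a y 0 = 0"
    using y by (simp add: moebius_conj_def cpser_of_real[OF summable_abs] disc_moebius_def
        Moebius_function_eq_zero)
  show "norm (moebius_conj a y w) < 1" if "norm w < 1" for w
    unfolding moebius_conj_def
    using norm_disc_moebius_lt_1[of "-y" w] y that
    by (intro norm_disc_moebius_lt_1 py norm_cpser_lt_1) simp
qed

lemma moebius_conj_disc_moebius_of_real: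
  assumes x: "\<bar>x\<bar> < 1" and y: "\<bar>y\<bar> < 1"
  shows "moebius_conj a y (disc_moebius y (of_real x)) = disc_moebius (pser a y) (of_real (pser a x))"
  using disc_moebius_inverse[OF y, of "of_real x"] x y
  by (simp add: moebius_conj_def cpser_of_real[OF summable_abs])

lemma norm_moebius_conj_of_real:
  assumes x: "\<bar>x\<bar> < 1" and y: "\<bar>y\<bar> < 1"
  shows "norm (moebius_conj a y (disc_moebius y (of_real x))) = pdist (pser a x) (pser a y)"
  using x y by (simp add: moebius_conj_disc_moebius_of_real norm_disc_moebius_of_real abs_pser_lt_1)

lemma pdist_pser_le:
  assumes x: "\<bar>x\<bar> < 1" and y: "\<bar>y\<bar> < 1"
  shows "pdist (pser a x) (pser a y) \<le> pdist x y"
  using Schwarz_Lemma(1)[OF moebius_conj_self_map[OF y], of "disc_moebius y (of_real x)"] x y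
  by (simp add: norm_disc_moebius_lt_1 norm_moebius_conj_of_real norm_disc_moebius_of_real pdist_lt_1)

lemma pdist_pser_eq_imp_rotation:
  assumes x: "\<bar>x\<bar> < 1" and y: "\<bar>y\<bar> < 1" and "x \<noteq> y"
    and eq: "pdist (pser a x) (pser a y) = pdist x y"
  obtains \<alpha> where "norm \<alpha> = 1" and "\<And>w. norm w < 1 \<Longrightarrow> moebius_conj a y w = \<alpha> * w"
proof -
  define w where "w = disc_moebius y (of_real x)"
  have "norm w = pdist x y"
    using x y by (simp add: w_def norm_disc_moebius_of_real)
  then have "norm w < 1" "w \<noteq> 0" "norm (moebius_conj a y w) = norm w"
    using pdist_lt_1[OF x y] pdist_pos[OF x y \<open>x \<noteq> y\<close>] eq norm_moebius_conj_of_real[OF x y]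
    by (auto simp: w_def)
  then show ?thesis
    using Schwarz_Lemma(3)[OF moebius_conj_self_map[OF y]] that by blast
qed

lemma pser_not_sign_id:
  assumes r: "\<bar>r\<bar> = 1"
  shows "\<exists>x. \<bar>x\<bar> < 1 \<and> pser a x \<noteq> r * x"
proof (rule ccontr)
  assume "\<not> ?thesis"
  then have id: "pser a x = r * x" if "\<bar>x\<bar> < 1" for x
    using that by blast
  have "a 0 = 0"
    using id[of 0] by simp
  then have "\<bar>r / 2 - a 1 / 2\<bar> \<le> (1 - \<bar>a 1\<bar>) / 4"
    using pser_quadratic_approx[of "1/2"] id[of "1/2"] by (simp add: power2_eq_square)
  moreover have "1 - \<bar>a 1\<bar> \<le> \<bar>r - a 1\<bar>"
    using abs_triangle_ineq2[of r "a 1"] r by simp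
  ultimately show False
    using abs_coeff_lt_1[of 1] by (simp add: abs_if split: if_splits)
qed

lemma pser_moebius_involution_center:
  assumes inv: "\<And>x. \<bar>x\<bar> < 1 \<Longrightarrow> pser a x * (1 - c * x) = c - x"
  shows "c = 0"
proof -
  have c: "a 0 = c"
    using inv[of 0] by simp
  define x :: real where "x = (if 0 \<le> c then 1/2 else -1/2)"
  have x: "\<bar>x\<bar> = 1/2" and cx: "c * x = \<bar>c\<bar> / 2"
    by (auto simp: x_def)
  have s: "\<bar>c\<bar> < 1"
    using abs_coeff_lt_1[of 0] c by simp
  have den: "0 < 2 - \<bar>c\<bar>"
    using s by simp
  have "pser a x * (2 - \<bar>c\<bar>) = 2 * (c - x)"
    using inv[of x] x cx by (simp add: algebra_simps)
  then have "(pser a x - c) * (2 - \<bar>c\<bar>) = 2 * x * (c\<^sup>2 - 1)"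
    using cx by (simp add: algebra_simps power2_eq_square)
  then have "\<bar>pser a x - c\<bar> * \<bar>2 - \<bar>c\<bar>\<bar> = 2 * \<bar>x\<bar> * \<bar>c\<^sup>2 - 1\<bar>"
    by (metis abs_mult abs_numeral)
  moreover have "c\<^sup>2 < 1"
    using s by (simp add: abs_square_less_1)
  ultimately have "\<bar>pser a x - c\<bar> * (2 - \<bar>c\<bar>) = 1 - c\<^sup>2"
    using x den by simp
  moreover have "\<bar>pser a x - c\<bar> \<le> (1 - \<bar>c\<bar>) / 2"
    using norm_powser_minus_coeff0_le[of x] x c by (simp add: pser_def)
  ultimately have "1 - c\<^sup>2 \<le> (1 - \<bar>c\<bar>) / 2 * (2 - \<bar>c\<bar>)"
    using den by (metis mult_right_mono less_imp_le)
  then have "\<bar>c\<bar> \<le> \<bar>c\<bar> * \<bar>c\<bar>"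
    by (simp add: power2_eq_square field_simps)
  show "c = 0"
  proof (rule ccontr)
    assume "c \<noteq> 0"
    then have "\<bar>c\<bar> * \<bar>c\<bar> < \<bar>c\<bar> * 1"
      using mult_strict_left_mono[OF s, of "\<bar>c\<bar>"] by simp
    with \<open>\<bar>c\<bar> \<le> \<bar>c\<bar> * \<bar>c\<bar>\<close> show False by simp
  qed
qed

lemma rotation_imp_real_sign:
  assumes L: "\<bar>L\<bar> < 1" and fixed: "pser a L = L" and \<alpha>: "norm \<alpha> = 1"
    and rot: "\<And>w. norm w < 1 \<Longrightarrow> moebius_conj a L w = \<alpha> * w"
  obtains r where "r = 1 \<or> r = -1"
    and "\<And>x. \<bar>x\<bar> < 1 \<Longrightarrow> (pser a x - L) * (1 - L * x) = r * (x - L) * (1 - L * pser a x)"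
proof -
  define m where "m u = (u - L) / (1 - L * u)" for u
  have conj: "of_real (m (pser a x)) = \<alpha> * of_real (m x)" if x: "\<bar>x\<bar> < 1" for x
  proof -
    have "norm (disc_moebius L (of_real x)) < 1"
      using norm_disc_moebius_lt_1 L x by simp
    then have "moebius_conj a L (disc_moebius L (of_real x)) = \<alpha> * disc_moebius L (of_real x)"
      by (rule rot)
    moreover have "moebius_conj a L (disc_moebius L (of_real x)) = disc_moebius L (of_real (pser a x))"
      using moebius_conj_disc_moebius_of_real[OF x L] fixed by simp
    ultimately show ?thesis
      by (simp add: disc_moebius_of_real m_def)
  qed
  define x0 where "x0 = (1/2 + L) / (1 + L / 2)"
  have x0_moebius: "disc_moebius (-L) (1/2) = of_real x0"
    using disc_moebius_of_real[of "-L" "1/2"] by (simp add: x0_def)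
  have x0: "\<bar>x0\<bar> < 1"
    using norm_disc_moebius_lt_1[of "-L" "1/2"] L by (simp add: x0_moebius)
  have "disc_moebius L (of_real x0) = 1/2"
    using disc_moebius_inverse[of "-L" "1/2"] L by (simp add: x0_moebius)
  then have "of_real (m x0) = (of_real (1/2) :: complex)"
    unfolding disc_moebius_of_real m_def[symmetric] by simp
  then have "m x0 = 1/2"
    by (simp only: of_real_eq_iff)
  define r where "r = 2 * m (pser a x0)"
  have \<alpha>_real: "\<alpha> = of_real r"
    using conj[OF x0] \<open>m x0 = 1/2\<close> by (simp add: r_def mult.commute)
  show ?thesis
  proof
    show "r = 1 \<or> r = -1"
      using \<alpha> by (auto simp: \<alpha>_real abs_if split: if_splits)
    fix x :: real
    assume x: "\<bar>x\<bar> < 1"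
    have "m (pser a x) = r * m x"
      using conj[OF x] by (simp flip: of_real_mult add: \<alpha>_real)
    then show "(pser a x - L) * (1 - L * x) = r * (x - L) * (1 - L * pser a x)"
      using one_minus_mult_pos[OF L x] one_minus_mult_pos[OF L abs_pser_lt_1[OF x]]
      by (simp add: m_def field_simps)
  qed
qed

lemma moebius_conj_not_rotation:
  assumes L: "\<bar>L\<bar> < 1" and fixed: "pser a L = L" and \<alpha>: "norm \<alpha> = 1"
  shows "\<exists>w. norm w < 1 \<and> moebius_conj a L w \<noteq> \<alpha> * w"
proof (rule ccontr)
  assume "\<not> ?thesis"
  then obtain r where r: "r = 1 \<or> r = -1"
    and rel: "\<And>x. \<bar>x\<bar> < 1 \<Longrightarrow> (pser a x - L) * (1 - L * x) = r * (x - L) * (1 - L * pser a x)"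
    using rotation_imp_real_sign[OF L fixed \<alpha>] by blast
  have "0 < 1 - L\<^sup>2"
    using one_minus_mult_pos[OF L L] by (simp add: power2_eq_square)
  have "pser a x = r * x" if x: "\<bar>x\<bar> < 1" for x
    using r
  proof
    assume "r = 1"
    then have "(pser a x - x) * (1 - L\<^sup>2) = 0"
      using rel[OF x] by (simp add: algebra_simps power2_eq_square)
    then show ?thesis
      using \<open>0 < 1 - L\<^sup>2\<close> \<open>r = 1\<close> by simp
  next
    assume "r = -1"
    define c where "c = 2 * L / (1 + L\<^sup>2)"
    have "0 < 1 + L\<^sup>2"
      by (simp add: add_pos_nonneg)
    have inv: "pser a u * (1 - c * u) = c - u" if "\<bar>u\<bar> < 1" for u
    proof -
      have "pser a u * (1 + L\<^sup>2 - 2 * L * u) = 2 * L - (1 + L\<^sup>2) * u"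
        using rel[OF that] \<open>r = -1\<close> by (simp add: algebra_simps power2_eq_square)
      then show ?thesis
        using \<open>0 < 1 + L\<^sup>2\<close> by (simp add: c_def field_simps)
    qed
    then have "c = 0"
      by (rule pser_moebius_involution_center)
    with inv[OF x] \<open>r = -1\<close> show ?thesis by simp
  qed
  then show False
    using pser_not_sign_id[of r] r by auto
qed

lemma pdist_funpow_pser_le:
  assumes "\<bar>x\<bar> < 1" and "\<bar>y\<bar> < 1"
  shows "pdist ((pser a ^^ n) x) ((pser a ^^ n) y) \<le> pdist x y"
proof (induction n)
  case (Suc n)
  have "pdist ((pser a ^^ Suc n) x) ((pser a ^^ Suc n) y) \<le> pdist ((pser a ^^ n) x) ((pser a ^^ n) y)"
    using pdist_pser_le abs_funpow_pser_lt_1 assms by simp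
  with Suc.IH show ?case
    by linarith
qed simp

lemma pdist_pser_less_fixed_point:
  assumes z: "\<bar>z\<bar> < 1" and L: "\<bar>L\<bar> < 1" and fixed: "pser a L = L" and "z \<noteq> L"
  shows "pdist (pser a z) L < pdist z L"
proof -
  have "pdist (pser a z) (pser a L) \<noteq> pdist z L"
  proof
    assume "pdist (pser a z) (pser a L) = pdist z L"
    then obtain \<alpha> where "norm \<alpha> = 1" and "\<And>w. norm w < 1 \<Longrightarrow> moebius_conj a L w = \<alpha> * w"
      using pdist_pser_eq_imp_rotation[OF z L \<open>z \<noteq> L\<close>] by blast
    with moebius_conj_not_rotation[OF L fixed] show False
      by blast
  qed
  with pdist_pser_le[OF z L] fixed show ?thesis
    by simp
qed

end

theorem corollary3:
  fixes a :: "nat \<Rightarrow> real" and L :: real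
  assumes coeff_bound: "\<And>i. -1 < a i \<and> a i < 1"
    and abs_summable: "summable (\<lambda>i. \<bar>a i\<bar>)"
    and abs_sum_le: "(\<Sum>i. \<bar>a i\<bar>) \<le> 1"
    and lim0: "(\<lambda>n. (pser a ^^ n) 0) \<longlonglongrightarrow> L"
  shows "\<forall>t\<in>{-1<..<1}. (\<lambda>n. (pser a ^^ n) t) \<longlonglongrightarrow> L"
proof
  interpret subunit_pser a
    by unfold_locales (use coeff_bound abs_summable abs_sum_le in \<open>auto simp: abs_less_iff\<close>)
  fix t :: real
  assume "t \<in> {-1<..<1}"
  then have t: "\<bar>t\<bar> < 1"
    by auto
  have "\<bar>L\<bar> \<le> 1"
    by (rule LIMSEQ_le_const2[OF tendsto_rabs[OF lim0]])
      (use abs_funpow_pser_lt_1[of 0] in \<open>auto intro: less_imp_le\<close>)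
  then consider "\<bar>L\<bar> = 1" | "\<bar>L\<bar> < 1"
    by linarith
  then show "(\<lambda>n. (pser a ^^ n) t) \<longlonglongrightarrow> L"
  proof cases
    case 1
    have "pdist t 0 = \<bar>t\<bar>"
      by (simp add: pdist_def)
    then have bounded: "pdist ((pser a ^^ n) t) ((pser a ^^ n) 0) \<le> \<bar>t\<bar>" for n
      using pdist_funpow_pser_le[OF t, of 0 n] by simp
    show ?thesis
      by (rule tendsto_boundary_if_pdist_bounded[OF lim0 1 _ _ bounded])
        (simp_all add: abs_funpow_pser_lt_1 t)
  next
    case 2
    have "pser a L = L"
      by (rule fixed_point_if_funpow_tendsto[OF lim0 isCont_pser[OF summable_abs 2]])
    with 2 show ?thesis
      by (intro funpow_tendsto_attracting_fixed_point abs_pser_lt_1 isCont_pser[OF summable_abs]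
          pdist_pser_less_fixed_point t)
  qed
qed

end
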